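(* Let $S=\bigoplus_{i\in\mathbb{Z}}S_i$ be an epsilon-strongly $\mathbb{Z}$-graded ring with principal component $R=S_0$. If $R$ is right (respectively left) noetherian, then $S$ is right (respectively left) noetherian.
   Context: All rings are associative with multiplicative identity $1\neq 0$. A ring $S$ is $\mathbb{Z}$-graded if $S=\bigoplus_{i\in\mathbb{Z}}S_i$ for additive subgroups $S_i$ with $S_iS_j\subseteq S_{i+j}$; $S_0$ is the principal component. $S$ is epsilon-strongly $\mathbb{Z}$-graded if (a) $S_iS_{-i}S_i=S_i$ for all $i$, and (b) for each $i$ the ideal $S_iS_{-i}$ of $S_0$ has a multiplicative identity. *)

theory Defs
  imports Main
begin

definition setprod :: "'a::ring_1 set \<Rightarrow> 'a set \<Rightarrow> 'a set" where
  "setprod A B = {x. \<exists>(n::nat) f g. (\<forall>k<n. f k \<in> A \<and> g k \<in> B) \<and> x = (\<Sum>k<n. f k * g k)}"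

definition additive_subgroup :: "'a::ring_1 set \<Rightarrow> bool" where
  "additive_subgroup A \<longleftrightarrow> 0 \<in> A \<and> (\<forall>x\<in>A. \<forall>y\<in>A. x + y \<in> A) \<and> (\<forall>x\<in>A. - x \<in> A)"

definition Z_graded :: "(int \<Rightarrow> 'a::ring_1 set) \<Rightarrow> bool" where
  "Z_graded G \<longleftrightarrow>
     (\<forall>i. additive_subgroup (G i)) \<and>
     (\<forall>i j. \<forall>x\<in>G i. \<forall>y\<in>G j. x * y \<in> G (i + j)) \<and>
     (\<forall>x. \<exists>!c :: int \<Rightarrow> 'a. finite {i. c i \<noteq> 0} \<and> (\<forall>i. c i \<in> G i) \<and>
            x = (\<Sum>i\<in>{i. c i \<noteq> 0}. c i))"

definition epsilon_strongly_Z_graded :: "(int \<Rightarrow> 'a::ring_1 set) \<Rightarrow> bool" where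
  "epsilon_strongly_Z_graded G \<longleftrightarrow> Z_graded G \<and>
     (\<forall>i. setprod (setprod (G i) (G (-i))) (G i) = G i) \<and>
     (\<forall>i. \<exists>e\<in>setprod (G i) (G (-i)). \<forall>x\<in>setprod (G i) (G (-i)). e * x = x \<and> x * e = x)"

definition right_ideal_in :: "'a::ring_1 set \<Rightarrow> 'a set \<Rightarrow> bool" where
  "right_ideal_in R I \<longleftrightarrow> I \<subseteq> R \<and> additive_subgroup I \<and> (\<forall>x\<in>I. \<forall>r\<in>R. x * r \<in> I)"

definition left_ideal_in :: "'a::ring_1 set \<Rightarrow> 'a set \<Rightarrow> bool" where
  "left_ideal_in R I \<longleftrightarrow> I \<subseteq> R \<and> additive_subgroup I \<and> (\<forall>x\<in>I. \<forall>r\<in>R. r * x \<in> I)"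

definition right_noetherian :: "'a::ring_1 set \<Rightarrow> bool" where
  "right_noetherian R \<longleftrightarrow> (\<forall>I :: nat \<Rightarrow> 'a set. (\<forall>n. right_ideal_in R (I n)) \<and> (\<forall>n. I n \<subseteq> I (Suc n))
      \<longrightarrow> (\<exists>N. \<forall>n\<ge>N. I n = I N))"

definition left_noetherian :: "'a::ring_1 set \<Rightarrow> bool" where
  "left_noetherian R \<longleftrightarrow> (\<forall>I :: nat \<Rightarrow> 'a set. (\<forall>n. left_ideal_in R (I n)) \<and> (\<forall>n. I n \<subseteq> I (Suc n))
      \<longrightarrow> (\<exists>N. \<forall>n\<ge>N. I n = I N))"

end

theory Submission
  imports Defs
begin

(* For right ideals J of S and w \<ge> 0 let L_w(J) be the set of degree-0 components of those
  elements of J whose support lies in [-w, 0]; these are right ideals of R = S_0, increasing in w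
  and in J. If J \<subseteq> J' and L_w(J') = L_w(J) for all w, then J' = J: for x \<in> J' supported in
  [b - w, b], epsilon-strongness provides e \<in> S_{-b} S_b with x_b e = x_b, and lifting each product
  u v occurring in e through L_w(J) yields z \<in> J with the same support bound and z_b = x_b, so x - z
  has smaller support width. An ascending chain I_n of right ideals of S thus gives right ideals
  L_w(I_n) of R, monotone in both indices; the ascending chain condition in R makes them stationary
  in n uniformly in w (the diagonal and finitely many rows stabilise), hence I_n is stationary.
  The left-handed statement follows by passing to the opposite ring. *)

lemma mult_mem_setprod: "a \<in> A \<Longrightarrow> b \<in> B \<Longrightarrow> a * b \<in> setprod A B"
  unfolding setprod_def
  by (intro CollectI exI[of _ "1::nat"] exI[of _ "\<lambda>_. a"] exI[of _ "\<lambda>_. b"]) simp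

lemma setprod_induct [consumes 1, case_names zero add mult]:
  assumes "x \<in> setprod A B"
    and "P 0"
    and "\<And>x y. P x \<Longrightarrow> P y \<Longrightarrow> P (x + y)"
    and "\<And>a b. a \<in> A \<Longrightarrow> b \<in> B \<Longrightarrow> P (a * b)"
  shows "P x"
proof -
  obtain n :: nat and f g where fg: "\<forall>k<n. f k \<in> A \<and> g k \<in> B" and x: "x = (\<Sum>k<n. f k * g k)"
    using assms(1) unfolding setprod_def by blast
  have "P (\<Sum>k<m. f k * g k)" if "m \<le> n" for m
    using that by (induction m) (simp_all add: assms(2,3,4) fg)
  then show ?thesis by (simp add: x)
qed

lemma zero_mem_setprod: "0 \<in> setprod A B"
  unfolding setprod_def by (intro CollectI exI[of _ "0::nat"]) simp

lemma add_mult_mem_setprod: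
  assumes "x \<in> setprod A B" "a \<in> A" "b \<in> B"
  shows "x + a * b \<in> setprod A B"
proof -
  obtain n :: nat and f g where fg: "\<forall>k<n. f k \<in> A \<and> g k \<in> B" and x: "x = (\<Sum>k<n. f k * g k)"
    using assms(1) unfolding setprod_def by blast
  have "x + a * b = (\<Sum>k<Suc n. (f(n := a)) k * (g(n := b)) k)"
    by (simp add: x)
  moreover have "\<forall>k<Suc n. (f(n := a)) k \<in> A \<and> (g(n := b)) k \<in> B"
    using fg assms(2,3) by (simp add: less_Suc_eq)
  ultimately show ?thesis unfolding setprod_def by blast
qed

lemma add_mem_setprod:
  assumes "x \<in> setprod A B" "y \<in> setprod A B"
  shows "x + y \<in> setprod A B"
  using assms(2,1)
proof (induction y arbitrary: x rule: setprod_induct)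
  case (add y1 y2)
  then show ?case by (metis add.assoc)
qed (simp_all add: add_mult_mem_setprod)

lemma setprod_assoc: "setprod (setprod A B) C = setprod A (setprod B C)"
proof (intro set_eqI iffI)
  fix x assume "x \<in> setprod (setprod A B) C"
  then show "x \<in> setprod A (setprod B C)"
  proof (induction rule: setprod_induct)
    case (mult p c)
    from \<open>p \<in> setprod A B\<close> show ?case
      by (induction rule: setprod_induct)
        (simp_all add: zero_mem_setprod add_mem_setprod distrib_right mult.assoc mult_mem_setprod \<open>c \<in> C\<close>)
  qed (simp_all add: zero_mem_setprod add_mem_setprod)
next
  fix x assume "x \<in> setprod A (setprod B C)"
  then show "x \<in> setprod (setprod A B) C"
  proof (induction rule: setprod_induct)
    case (mult a q)
    from \<open>q \<in> setprod B C\<close> show ?case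
      by (induction rule: setprod_induct)
        (simp_all add: zero_mem_setprod add_mem_setprod distrib_left mult.assoc[symmetric] mult_mem_setprod \<open>a \<in> A\<close>)
  qed (simp_all add: zero_mem_setprod add_mem_setprod)
qed

lemma right_unit_setprod_setprod:
  assumes unit: "\<forall>y\<in>setprod B A. y * e = y" and x: "x \<in> setprod (setprod A B) A"
  shows "x * e = x"
proof -
  from x have "x \<in> setprod A (setprod B A)" by (simp add: setprod_assoc)
  then show ?thesis
    by (induction rule: setprod_induct) (simp_all add: distrib_right mult.assoc unit)
qed

lemma eventually_eq_Union_if_stationary:
  assumes "\<exists>N. \<forall>n\<ge>N. C n = C N" and "\<And>n. C n \<subseteq> C (Suc n)"
  shows "\<forall>\<^sub>F n in sequentially. C n = (\<Union>m. C m)"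
proof -
  obtain N where N: "\<And>n. n \<ge> N \<Longrightarrow> C n = C N" using assms(1) by blast
  have "C m \<subseteq> C N" for m
    using lift_Suc_mono_le[of C m "max m N", OF assms(2)] N[of "max m N"] by simp
  then have "(\<Union>m. C m) = C N" by blast
  with N show ?thesis unfolding eventually_sequentially by metis
qed

lemma acc_doubly_indexed_stationary:
  fixes L :: "nat \<Rightarrow> nat \<Rightarrow> 'b set"
  assumes acc: "\<forall>C. (\<forall>n. Q (C n)) \<and> (\<forall>n. C n \<subseteq> C (Suc n)) \<longrightarrow> (\<exists>N. \<forall>n\<ge>N. C n = C N)"
    and Q: "\<And>w n. Q (L w n)"
    and L_mono: "\<And>w w' n n'. w \<le> w' \<Longrightarrow> n \<le> n' \<Longrightarrow> L w n \<subseteq> L w' n'"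
  shows "\<exists>M. \<forall>n\<ge>M. \<forall>w. L w n = L w M"
proof -
  define U where "U w = (\<Union>n. L w n)" for w
  define D where "D = (\<Union>n. L n n)"
  have "\<forall>\<^sub>F n in sequentially. L n n = D"
    unfolding D_def using acc Q L_mono by (intro eventually_eq_Union_if_stationary) auto
  then obtain N where N: "\<And>n. n \<ge> N \<Longrightarrow> L n n = D"
    unfolding eventually_sequentially by blast
  have "\<forall>\<^sub>F n in sequentially. L w n = U w" for w
    unfolding U_def using acc Q L_mono by (intro eventually_eq_Union_if_stationary) auto
  then have "\<forall>\<^sub>F n in sequentially. n \<ge> N \<and> (\<forall>w\<in>{..<N}. L w n = U w)"
    by (intro eventually_conj eventually_ge_at_top eventually_ball_finite) auto
  moreover have "L w n = U w" if "n \<ge> N" "w \<ge> N" for w n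
  proof -
    have "L w m \<subseteq> D" for m
      using L_mono[of w "max w m" m "max w m"] unfolding D_def by auto
    then have "U w \<subseteq> L N N" using N[of N] unfolding U_def by auto
    also have "L N N \<subseteq> L w n" using L_mono that by blast
    finally show ?thesis unfolding U_def by blast
  qed
  ultimately have "\<forall>\<^sub>F n in sequentially. \<forall>w. L w n = U w"
    by (elim eventually_mono) (meson lessThan_iff not_le)
  then obtain M where "\<And>n w. n \<ge> M \<Longrightarrow> L w n = U w"
    unfolding eventually_sequentially by blast
  then show ?thesis by (metis order_refl)
qed

lemma additive_subgroup_diff:
  "additive_subgroup A \<Longrightarrow> x \<in> A \<Longrightarrow> y \<in> A \<Longrightarrow> x - y \<in> A"
  unfolding additive_subgroup_def by (metis diff_conv_add_uminus)

definition hcomp :: "(int \<Rightarrow> 'a::ring_1 set) \<Rightarrow> 'a \<Rightarrow> int \<Rightarrow> 'a" where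
  "hcomp G x = (THE c. finite {i. c i \<noteq> 0} \<and> (\<forall>i. c i \<in> G i) \<and> x = (\<Sum>i\<in>{i. c i \<noteq> 0}. c i))"

definition support :: "(int \<Rightarrow> 'a::ring_1 set) \<Rightarrow> 'a \<Rightarrow> int set" where
  "support G x = {i. hcomp G x i \<noteq> 0}"

locale Z_grading =
  fixes G :: "int \<Rightarrow> 'a::ring_1 set"
  assumes Z_graded: "Z_graded G"
begin

lemma additive_subgroup_grade: "additive_subgroup (G i)"
  using Z_graded unfolding Z_graded_def by blast

lemma grade_mult: "x \<in> G i \<Longrightarrow> y \<in> G j \<Longrightarrow> x * y \<in> G (i + j)"
  using Z_graded unfolding Z_graded_def by blast

lemma hcomp_decomposition:
  "finite (support G x) \<and> (\<forall>i. hcomp G x i \<in> G i) \<and> x = sum (hcomp G x) (support G x)"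
proof -
  have "\<exists>!c. finite {i. c i \<noteq> 0} \<and> (\<forall>i. c i \<in> G i) \<and> x = sum c {i. c i \<noteq> 0}"
    using Z_graded unfolding Z_graded_def by blast
  from theI'[OF this] show ?thesis unfolding hcomp_def support_def .
qed

lemma hcomp_in_grade: "hcomp G x i \<in> G i"
  using hcomp_decomposition by blast

lemma finite_support: "finite (support G x)"
  using hcomp_decomposition by blast

lemma sum_hcomp:
  assumes "finite F" "support G x \<subseteq> F"
  shows "sum (hcomp G x) F = x"
proof -
  have "sum (hcomp G x) F = sum (hcomp G x) (support G x)"
    by (rule sum.mono_neutral_right) (use assms in \<open>auto simp: support_def\<close>)
  with hcomp_decomposition show ?thesis by simp
qed

lemma hcomp_unique:
  assumes "finite F" "\<And>i. c i \<in> G i" "\<And>i. i \<notin> F \<Longrightarrow> c i = 0" "x = sum c F"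
  shows "hcomp G x = c"
proof -
  have supp: "{i. c i \<noteq> 0} \<subseteq> F" using assms(3) by blast
  have "sum c F = sum c {i. c i \<noteq> 0}"
    by (rule sum.mono_neutral_right) (use assms(1) supp in auto)
  then have "finite {i. c i \<noteq> 0} \<and> (\<forall>i. c i \<in> G i) \<and> x = sum c {i. c i \<noteq> 0}"
    using finite_subset[OF supp assms(1)] assms(2,4) by simp
  moreover have "\<exists>!c. finite {i. c i \<noteq> 0} \<and> (\<forall>i. c i \<in> G i) \<and> x = sum c {i. c i \<noteq> 0}"
    using Z_graded unfolding Z_graded_def by blast
  ultimately show ?thesis
    unfolding hcomp_def by (rule the1_equality[rotated])
qed

lemma hcomp_diff: "hcomp G (x - y) i = hcomp G x i - hcomp G y i"
proof -
  let ?F = "support G x \<union> support G y"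
  have "hcomp G (x - y) = (\<lambda>i. hcomp G x i - hcomp G y i)"
  proof (rule hcomp_unique)
    show "finite ?F" using finite_support by blast
    show "hcomp G x i - hcomp G y i \<in> G i" for i
      using additive_subgroup_diff[OF additive_subgroup_grade] hcomp_in_grade by blast
    show "i \<notin> ?F \<Longrightarrow> hcomp G x i - hcomp G y i = 0" for i
      by (simp add: support_def)
    show "x - y = (\<Sum>i\<in>?F. hcomp G x i - hcomp G y i)"
      by (simp add: sum_subtractf sum_hcomp finite_support)
  qed
  then show ?thesis by simp
qed

lemma hcomp_zero: "hcomp G 0 i = 0"
proof -
  have "hcomp G 0 = (\<lambda>i. 0)"
    by (rule hcomp_unique[where F = "{}"])
      (simp_all add: additive_subgroup_grade[unfolded additive_subgroup_def])
  then show ?thesis by simp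
qed

lemma hcomp_add: "hcomp G (x + y) i = hcomp G x i + hcomp G y i"
  using hcomp_diff[of x "- y" i] hcomp_diff[of 0 y i] by (simp add: hcomp_zero)

lemma hcomp_mult_right:
  assumes "s \<in> G e"
  shows "hcomp G (x * s) j = hcomp G x (j - e) * s"
proof -
  let ?F = "(\<lambda>i. i + e) ` support G x"
  have "hcomp G (x * s) = (\<lambda>j. hcomp G x (j - e) * s)"
  proof (rule hcomp_unique)
    show "finite ?F" using finite_support by blast
    show "hcomp G x (j - e) * s \<in> G j" for j
      using grade_mult[OF hcomp_in_grade assms, of x "j - e"] by simp
    show "j \<notin> ?F \<Longrightarrow> hcomp G x (j - e) * s = 0" for j
      by (auto simp: support_def image_iff dest: spec[of _ "j - e"])
    have "x * s = (\<Sum>i\<in>support G x. hcomp G x i * s)"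
      by (simp add: sum_distrib_right[symmetric] sum_hcomp finite_support)
    also have "\<dots> = (\<Sum>j\<in>?F. hcomp G x (j - e) * s)"
      by (simp add: sum.reindex)
    finally show "x * s = (\<Sum>j\<in>?F. hcomp G x (j - e) * s)" .
  qed
  then show ?thesis by simp
qed

lemma support_diff: "support G (x - y) \<subseteq> support G x \<union> support G y"
  by (auto simp: support_def hcomp_diff)

lemma support_add: "support G (x + y) \<subseteq> support G x \<union> support G y"
  by (auto simp: support_def hcomp_add)

lemma support_mult_right:
  assumes "support G x \<subseteq> {a..b}" "s \<in> G e"
  shows "support G (x * s) \<subseteq> {a + e..b + e}"
proof
  fix j assume "j \<in> support G (x * s)"
  then have "j - e \<in> support G x" by (auto simp: support_def hcomp_mult_right[OF assms(2)])
  with assms(1) show "j \<in> {a + e..b + e}" by auto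
qed

lemma support_empty_iff: "support G x = {} \<longleftrightarrow> x = 0"
  using sum_hcomp[of "{}" x] by (auto simp: support_def hcomp_zero)

lemma support_bounded: "\<exists>b n. support G x \<subseteq> {b - int n<..b}"
proof -
  obtain l u where "support G x \<subseteq> {l..u}"
    using finite_support[of x] bdd_above_finite bdd_below_finite
    by (metis atLeastAtMost_iff bdd_above_def bdd_below_def subsetI)
  then have "support G x \<subseteq> {u - int (nat (u - l + 1))<..u}" by auto
  then show ?thesis by blast
qed

end

(* Degree 0 is the top of the window [-w, 0], so this is the analogue of the ideal of leading
  coefficients of polynomials of degree at most w in the proof of Hilbert's basis theorem. *)
definition leading_ideal :: "(int \<Rightarrow> 'a::ring_1 set) \<Rightarrow> nat \<Rightarrow> 'a set \<Rightarrow> 'a set" where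
  "leading_ideal G w J = {hcomp G x 0 | x. x \<in> J \<and> support G x \<subseteq> {- int w..0}}"

context Z_grading
begin

lemma leading_ideal_mono: "w \<le> w' \<Longrightarrow> J \<subseteq> J' \<Longrightarrow> leading_ideal G w J \<subseteq> leading_ideal G w' J'"
  unfolding leading_ideal_def by fastforce

lemma right_ideal_leading_ideal:
  assumes J: "right_ideal_in UNIV J"
  shows "right_ideal_in (G 0) (leading_ideal G w J)"
proof -
  have J_sub: "additive_subgroup J" and J_mult: "\<And>x r. x \<in> J \<Longrightarrow> x * r \<in> J"
    using J unfolding right_ideal_in_def by auto
  let ?S = "{- int w..0}"
  have "0 \<in> leading_ideal G w J"
    using J_sub unfolding leading_ideal_def additive_subgroup_def
    by (auto intro!: exI[of _ 0] simp: hcomp_zero support_def)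
  moreover have "x - y \<in> leading_ideal G w J"
    if x: "x \<in> leading_ideal G w J" and y: "y \<in> leading_ideal G w J" for x y
  proof -
    obtain x' y' where "x' \<in> J" "support G x' \<subseteq> ?S" "x = hcomp G x' 0"
      and "y' \<in> J" "support G y' \<subseteq> ?S" "y = hcomp G y' 0"
      using x y unfolding leading_ideal_def by blast
    then show ?thesis unfolding leading_ideal_def
      using support_diff[of x' y'] additive_subgroup_diff[OF J_sub]
      by (auto intro!: exI[of _ "x' - y'"] simp: hcomp_diff)
  qed
  moreover have "x * r \<in> leading_ideal G w J"
    if x: "x \<in> leading_ideal G w J" and r: "r \<in> G 0" for x r
  proof -
    obtain x' where "x' \<in> J" "support G x' \<subseteq> ?S" "x = hcomp G x' 0"
      using x unfolding leading_ideal_def by blast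
    then show ?thesis unfolding leading_ideal_def
      using support_mult_right[OF _ r, of x'] J_mult
      by (auto intro!: exI[of _ "x' * r"] simp: hcomp_mult_right[OF r])
  qed
  moreover have "leading_ideal G w J \<subseteq> G 0"
    unfolding leading_ideal_def using hcomp_in_grade by blast
  ultimately show ?thesis
    unfolding right_ideal_in_def additive_subgroup_def
    by (metis diff_0 diff_minus_eq_add)
qed

end

locale eps_strong_Z_grading =
  fixes G :: "int \<Rightarrow> 'a::ring_1 set"
  assumes eps_strong: "epsilon_strongly_Z_graded G"

sublocale eps_strong_Z_grading \<subseteq> Z_grading
  using eps_strong by unfold_locales (simp add: epsilon_strongly_Z_graded_def)

context eps_strong_Z_grading
begin

lemma grade_right_unit:
  assumes "x \<in> G d"
  shows "\<exists>e\<in>setprod (G (- d)) (G d). x * e = x"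
proof -
  obtain e where "e \<in> setprod (G (- d)) (G d)" "\<forall>y\<in>setprod (G (- d)) (G d). y * e = y"
    using eps_strong unfolding epsilon_strongly_Z_graded_def by (metis minus_minus)
  moreover have "x \<in> setprod (setprod (G d) (G (- d))) (G d)"
    using eps_strong assms unfolding epsilon_strongly_Z_graded_def by simp
  ultimately show ?thesis using right_unit_setprod_setprod by blast
qed

lemma lift_top_component:
  assumes J: "right_ideal_in UNIV J" and J': "right_ideal_in UNIV J'"
    and leading: "leading_ideal G w J' \<subseteq> leading_ideal G w J"
    and x: "x \<in> J'" "support G x \<subseteq> {b - int w..b}"
  shows "\<exists>z\<in>J. support G z \<subseteq> {b - int w..b} \<and> hcomp G z b = hcomp G x b"
proof -
  let ?lifts = "\<lambda>c. \<exists>z\<in>J. support G z \<subseteq> {b - int w..b} \<and> hcomp G z b = c"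
  obtain e where e: "e \<in> setprod (G (- b)) (G b)" and x_e: "hcomp G x b * e = hcomp G x b"
    using grade_right_unit[OF hcomp_in_grade] by blast
  from e have "?lifts (hcomp G x b * e)"
  proof (induction rule: setprod_induct)
    case zero
    have "0 \<in> J" using J by (simp add: right_ideal_in_def additive_subgroup_def)
    then show ?case by (intro bexI[of _ 0]) (simp_all add: support_def hcomp_zero)
  next
    case (add e1 e2)
    then obtain z1 z2 where "z1 \<in> J" "support G z1 \<subseteq> {b - int w..b}" "hcomp G z1 b = hcomp G x b * e1"
      and "z2 \<in> J" "support G z2 \<subseteq> {b - int w..b}" "hcomp G z2 b = hcomp G x b * e2"
      by blast
    moreover have "z1 + z2 \<in> J"
      using J \<open>z1 \<in> J\<close> \<open>z2 \<in> J\<close> by (simp add: right_ideal_in_def additive_subgroup_def)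
    ultimately show ?case
      using support_add[of z1 z2] by (intro bexI[of _ "z1 + z2"]) (auto simp: hcomp_add distrib_left)
  next
    case (mult u v)
    have "x * u \<in> J'" using J' x(1) by (simp add: right_ideal_in_def)
    moreover have "support G (x * u) \<subseteq> {- int w..0}"
      using support_mult_right[OF x(2) \<open>u \<in> G (- b)\<close>] by simp
    ultimately have "hcomp G (x * u) 0 \<in> leading_ideal G w J"
      using leading unfolding leading_ideal_def by blast
    then obtain y where y: "y \<in> J" "support G y \<subseteq> {- int w..0}" "hcomp G y 0 = hcomp G x b * u"
      unfolding leading_ideal_def by (auto simp: hcomp_mult_right[OF \<open>u \<in> G (- b)\<close>])
    have "y * v \<in> J" using J y(1) by (simp add: right_ideal_in_def)
    moreover have "support G (y * v) \<subseteq> {b - int w..b}"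
      using support_mult_right[OF y(2) \<open>v \<in> G b\<close>] by simp
    moreover have "hcomp G (y * v) b = hcomp G x b * (u * v)"
      by (simp add: hcomp_mult_right[OF \<open>v \<in> G b\<close>] y(3) mult.assoc)
    ultimately show ?case by blast
  qed
  with x_e show ?thesis by simp
qed

lemma right_ideal_eq_if_leading_ideals_eq:
  assumes J: "right_ideal_in UNIV J" and J': "right_ideal_in UNIV J'" and "J \<subseteq> J'"
    and leading: "\<And>w. leading_ideal G w J' \<subseteq> leading_ideal G w J"
  shows "J' = J"
proof -
  have J_sub: "additive_subgroup J" and J'_sub: "additive_subgroup J'"
    using J J' by (simp_all add: right_ideal_in_def)
  have "x \<in> J" if "x \<in> J'" "support G x \<subseteq> {b - int n<..b}" for n b x
    using that
  proof (induction n arbitrary: b x)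
    case 0
    then have "x = 0" using support_empty_iff by auto
    then show ?case using J_sub by (simp add: additive_subgroup_def)
  next
    case (Suc n)
    moreover have "{b - int (Suc n)<..b} = {b - int n..b}" by auto
    ultimately have "support G x \<subseteq> {b - int n..b}" by simp
    then obtain z where z: "z \<in> J" "support G z \<subseteq> {b - int n..b}" "hcomp G z b = hcomp G x b"
      using lift_top_component[OF J J' leading \<open>x \<in> J'\<close>] by blast
    have "x - z \<in> J'" using additive_subgroup_diff[OF J'_sub] Suc.prems(1) z(1) \<open>J \<subseteq> J'\<close> by blast
    moreover have "support G (x - z) \<subseteq> {(b - 1) - int n<..b - 1}"
    proof -
      have "b \<notin> support G (x - z)" using z(3) by (simp add: support_def hcomp_diff)
      then have "support G (x - z) \<subseteq> {b - int n..b} - {b}"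
        using support_diff[of x z] \<open>support G x \<subseteq> {b - int n..b}\<close> z(2) by blast
      also have "\<dots> = {(b - 1) - int n<..b - 1}" by auto
      finally show ?thesis .
    qed
    ultimately have "x - z \<in> J" by (rule Suc.IH)
    then show ?case
      using z(1) J_sub by (metis additive_subgroup_def diff_add_cancel)
  qed
  then have "J' \<subseteq> J" using support_bounded by blast
  with \<open>J \<subseteq> J'\<close> show ?thesis by blast
qed

lemma right_noetherian_UNIV:
  assumes "right_noetherian (G 0)"
  shows "right_noetherian (UNIV :: 'a set)"
  unfolding right_noetherian_def
proof (intro allI impI, elim conjE)
  fix I :: "nat \<Rightarrow> 'a set"
  assume ideals: "\<forall>n. right_ideal_in UNIV (I n)" and chain: "\<forall>n. I n \<subseteq> I (Suc n)"
  have I_mono: "m \<le> n \<Longrightarrow> I m \<subseteq> I n" for m n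
    using lift_Suc_mono_le[of I] chain by blast
  have "\<exists>M. \<forall>n\<ge>M. \<forall>w. leading_ideal G w (I n) = leading_ideal G w (I M)"
  proof (rule acc_doubly_indexed_stationary)
    show "\<forall>C. (\<forall>n. right_ideal_in (G 0) (C n)) \<and> (\<forall>n. C n \<subseteq> C (Suc n)) \<longrightarrow> (\<exists>N. \<forall>n\<ge>N. C n = C N)"
      using assms unfolding right_noetherian_def .
    show "right_ideal_in (G 0) (leading_ideal G w (I n))" for w n
      using ideals right_ideal_leading_ideal by blast
    show "leading_ideal G w (I n) \<subseteq> leading_ideal G w' (I n')" if "w \<le> w'" "n \<le> n'" for w w' n n'
      using leading_ideal_mono I_mono that by blast
  qed
  then obtain M where M: "\<forall>n\<ge>M. \<forall>w. leading_ideal G w (I n) = leading_ideal G w (I M)" ..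
  have "I n = I M" if "n \<ge> M" for n
  proof (rule right_ideal_eq_if_leading_ideals_eq)
    show "right_ideal_in UNIV (I M)" "right_ideal_in UNIV (I n)" using ideals by blast+
    show "I M \<subseteq> I n" using I_mono that .
    show "leading_ideal G w (I n) \<subseteq> leading_ideal G w (I M)" for w using M that by blast
  qed
  then show "\<exists>N. \<forall>n\<ge>N. I n = I N" by blast
qed

end

datatype 'a opp = Opp (unop: 'a)

instantiation opp :: (ring_1) ring_1
begin

definition "0 = Opp 0"
definition "1 = Opp 1"
definition "x + y = Opp (unop x + unop y)"
definition "x - y = Opp (unop x - unop y)"
definition "- x = Opp (- unop x)"
definition "x * y = Opp (unop y * unop x)"

instance
  by standard
    (simp_all add: zero_opp_def one_opp_def plus_opp_def minus_opp_def uminus_opp_def times_opp_def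
      opp.expand algebra_simps)

end

lemma unop_zero [simp]: "unop 0 = 0"
  and unop_add [simp]: "unop (x + y) = unop x + unop y"
  and unop_minus [simp]: "unop (- x) = - unop x"
  and unop_mult [simp]: "unop (x * y) = unop y * unop x"
  by (simp_all add: zero_opp_def plus_opp_def uminus_opp_def times_opp_def)

lemma unop_sum [simp]: "unop (sum f A) = (\<Sum>a\<in>A. unop (f a))"
  by (induction A rule: infinite_finite_induct) simp_all

lemma unop_eq_iff [simp]: "unop x = unop y \<longleftrightarrow> x = y"
  by (metis opp.collapse)

lemma unop_eq_zero_iff [simp]: "unop x = 0 \<longleftrightarrow> x = 0"
  using unop_eq_iff[of x 0] by simp

lemma all_opp: "(\<forall>x. P x) \<longleftrightarrow> (\<forall>y. P (Opp y))"
  by (metis opp.collapse)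

lemma vimage_unop_vimage_Opp [simp]: "unop -` Opp -` C = C"
  by auto

lemma vimage_unop_subset_iff [simp]: "unop -` A \<subseteq> unop -` B \<longleftrightarrow> A \<subseteq> B"
  by (metis opp.sel subset_vimage_iff vimageI2 subsetI vimageD subsetD)

lemma vimage_unop_eq_iff [simp]: "unop -` A = unop -` B \<longleftrightarrow> A = B"
  by (simp add: set_eq_subset)

lemma additive_subgroup_vimage_unop [simp]:
  "additive_subgroup (unop -` A) \<longleftrightarrow> additive_subgroup A"
  unfolding additive_subgroup_def Ball_def by (simp add: all_opp[where 'a = 'a])

lemma setprod_vimage_unop: "setprod (unop -` A) (unop -` B) = unop -` setprod B A"
proof (intro set_eqI iffI)
  fix x assume "x \<in> setprod (unop -` A) (unop -` B)"
  then obtain n :: nat and f g where "\<forall>k<n. unop (f k) \<in> A \<and> unop (g k) \<in> B"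
    and "x = (\<Sum>k<n. f k * g k)"
    unfolding setprod_def by auto
  then have "(\<forall>k<n. unop (g k) \<in> B \<and> unop (f k) \<in> A) \<and> unop x = (\<Sum>k<n. unop (g k) * unop (f k))"
    by simp
  then show "x \<in> unop -` setprod B A"
    unfolding setprod_def vimage_eq mem_Collect_eq
    by (intro exI[of _ n] exI[of _ "\<lambda>k. unop (g k)"] exI[of _ "\<lambda>k. unop (f k)"])
next
  fix x assume "x \<in> unop -` setprod B A"
  then obtain n :: nat and f g where "\<forall>k<n. f k \<in> B \<and> g k \<in> A"
    and "unop x = (\<Sum>k<n. f k * g k)"
    unfolding setprod_def by auto
  then have "x = (\<Sum>k<n. Opp (g k) * Opp (f k))"
    by (simp flip: unop_eq_iff)
  moreover have "\<forall>k<n. unop (Opp (g k)) \<in> A \<and> unop (Opp (f k)) \<in> B"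
    using \<open>\<forall>k<n. f k \<in> B \<and> g k \<in> A\<close> by simp
  ultimately show "x \<in> setprod (unop -` A) (unop -` B)"
    unfolding setprod_def vimage_eq mem_Collect_eq
    by (intro exI[of _ n] exI[of _ "\<lambda>k. Opp (g k)"] exI[of _ "\<lambda>k. Opp (f k)"] conjI)
qed

lemma ex1_comp_unop:
  assumes "\<exists>!d. P d"
  shows "\<exists>!c. P (unop \<circ> c)"
proof -
  obtain d where d: "P d" and unique: "\<And>d'. P d' \<Longrightarrow> d' = d" using assms by blast
  show ?thesis
  proof (rule ex1I[of _ "Opp \<circ> d"])
    show "P (unop \<circ> (Opp \<circ> d))" using d by (simp add: comp_def)
    show "c = Opp \<circ> d" if "P (unop \<circ> c)" for c
    proof
      fix i
      have "unop \<circ> c = d" using that unique by blast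
      then show "c i = (Opp \<circ> d) i" by (metis comp_apply opp.collapse)
    qed
  qed
qed

lemma Z_graded_opp:
  assumes "Z_graded G"
  shows "Z_graded (\<lambda>i. unop -` G i)"
  unfolding Z_graded_def
proof (intro conjI allI ballI)
  show "additive_subgroup (unop -` G i)" for i
    using assms by (simp add: Z_graded_def)
  show "x * y \<in> unop -` G (i + j)" if "x \<in> unop -` G i" "y \<in> unop -` G j" for i j x y
  proof -
    have "\<forall>i j. \<forall>x\<in>G i. \<forall>y\<in>G j. x * y \<in> G (i + j)"
      using assms by (simp add: Z_graded_def)
    with that have "unop y * unop x \<in> G (j + i)" by simp
    then show ?thesis by (simp add: add.commute)
  qed
  fix x :: "'a opp"
  let ?P = "\<lambda>d. finite {i. d i \<noteq> 0} \<and> (\<forall>i. d i \<in> G i) \<and> unop x = sum d {i. d i \<noteq> 0}"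
  have transfer: "finite {i. c i \<noteq> 0} \<and> (\<forall>i. c i \<in> unop -` G i) \<and> x = sum c {i. c i \<noteq> 0}
      \<longleftrightarrow> ?P (unop \<circ> c)" for c
  proof -
    have "x = sum c S \<longleftrightarrow> unop x = (\<Sum>i\<in>S. unop (c i))" for S
      by (simp flip: unop_sum)
    then show ?thesis by simp
  qed
  have "\<exists>!d. ?P d"
    using assms[unfolded Z_graded_def, THEN conjunct2, THEN conjunct2, rule_format, of "unop x"] .
  then show "\<exists>!c. finite {i. c i \<noteq> 0} \<and> (\<forall>i. c i \<in> unop -` G i) \<and> x = sum c {i. c i \<noteq> 0}"
    unfolding transfer by (rule ex1_comp_unop)
qed

lemma epsilon_strongly_Z_graded_opp:
  assumes "epsilon_strongly_Z_graded G"
  shows "epsilon_strongly_Z_graded (\<lambda>i. unop -` G i)"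
proof -
  have graded: "Z_graded G"
    and triple: "\<And>i. setprod (setprod (G i) (G (- i))) (G i) = G i"
    and unit: "\<And>i. \<exists>e\<in>setprod (G i) (G (- i)). \<forall>x\<in>setprod (G i) (G (- i)). e * x = x \<and> x * e = x"
    using assms by (simp_all add: epsilon_strongly_Z_graded_def)
  have "setprod (setprod (unop -` G i) (unop -` G (- i))) (unop -` G i) = unop -` G i" for i
    \<comment> \<open>the opposite ring brackets the triple product the other way\<close>
    using triple by (simp add: setprod_vimage_unop setprod_assoc)
  moreover have "\<exists>e\<in>setprod (unop -` G i) (unop -` G (- i)).
      \<forall>x\<in>setprod (unop -` G i) (unop -` G (- i)). e * x = x \<and> x * e = x" for i
  proof -
    obtain e where e: "e \<in> setprod (G (- i)) (G i)"
      and e_unit: "\<And>y. y \<in> setprod (G (- i)) (G i) \<Longrightarrow> e * y = y \<and> y * e = y"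
      using unit[of "- i"] by auto
    have "Opp e * x = x \<and> x * Opp e = x" if "unop x \<in> setprod (G (- i)) (G i)" for x
      using e_unit[OF that] by (simp add: opp.expand)
    with e show ?thesis by (intro bexI[of _ "Opp e"]) (simp_all add: setprod_vimage_unop)
  qed
  ultimately show ?thesis
    using Z_graded_opp[OF graded] unfolding epsilon_strongly_Z_graded_def by blast
qed

lemma right_ideal_in_vimage_unop_iff:
  "right_ideal_in (unop -` R) (unop -` I) \<longleftrightarrow> left_ideal_in R I"
  unfolding right_ideal_in_def left_ideal_in_def Ball_def by (simp add: all_opp[where 'a = 'a])

lemma right_noetherian_vimage_unop_iff:
  "right_noetherian (unop -` R) \<longleftrightarrow> left_noetherian R"
proof
  assume noeth: "right_noetherian (unop -` R)"
  show "left_noetherian R" unfolding left_noetherian_def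
  proof (intro allI impI, elim conjE)
    fix I :: "nat \<Rightarrow> 'a set"
    assume "\<forall>n. left_ideal_in R (I n)" "\<forall>n. I n \<subseteq> I (Suc n)"
    then have "\<exists>N. \<forall>n\<ge>N. unop -` I n = unop -` I N"
      by (intro noeth[unfolded right_noetherian_def, rule_format] conjI)
        (simp_all add: right_ideal_in_vimage_unop_iff)
    then show "\<exists>N. \<forall>n\<ge>N. I n = I N" by simp
  qed
next
  assume noeth: "left_noetherian R"
  show "right_noetherian (unop -` R)" unfolding right_noetherian_def
  proof (intro allI impI, elim conjE)
    fix C :: "nat \<Rightarrow> 'a opp set"
    assume "\<forall>n. right_ideal_in (unop -` R) (C n)" "\<forall>n. C n \<subseteq> C (Suc n)"
    then have "\<exists>N. \<forall>n\<ge>N. Opp -` C n = Opp -` C N"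
      by (intro noeth[unfolded left_noetherian_def, rule_format] conjI)
        (simp_all add: vimage_mono flip: right_ideal_in_vimage_unop_iff)
    then show "\<exists>N. \<forall>n\<ge>N. C n = C N" by (metis vimage_unop_vimage_Opp)
  qed
qed

theorem proposition3p6:
  fixes G :: "int \<Rightarrow> 'a::ring_1 set"
  assumes "epsilon_strongly_Z_graded G"
  shows "(right_noetherian (G 0) \<longrightarrow> right_noetherian (UNIV :: 'a set)) \<and>
         (left_noetherian (G 0) \<longrightarrow> left_noetherian (UNIV :: 'a set))"
proof (intro conjI impI)
  interpret eps_strong_Z_grading G by unfold_locales (fact assms)
  show "right_noetherian (UNIV :: 'a set)" if "right_noetherian (G 0)"
    using that by (rule right_noetherian_UNIV)
next
  assume "left_noetherian (G 0)"
  interpret opp: eps_strong_Z_grading "\<lambda>i. unop -` G i"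
    by unfold_locales (rule epsilon_strongly_Z_graded_opp[OF assms])
  have "right_noetherian (unop -` G 0)"
    using \<open>left_noetherian (G 0)\<close> by (simp add: right_noetherian_vimage_unop_iff)
  then have "right_noetherian (UNIV :: 'a opp set)"
    by (rule opp.right_noetherian_UNIV)
  then show "left_noetherian (UNIV :: 'a set)"
    using right_noetherian_vimage_unop_iff[of "UNIV :: 'a set"] by simp
qed

end
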